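(* Let $\lvert\psi\rangle$ be an $n$-qubit state. Suppose the fidelity $\lvert\langle\psi|\phi\rangle\rvert^2$ is maximized by $\lvert\phi\rangle = \lvert0^n\rangle$ over stabilizer states $\lvert\phi\rangle$. Let $S^* = 0^n \times \mathbb F_2^n = \mathrm{Weyl}(\lvert0^n\rangle)$, and let $T = 0^{n + 1} \times \mathbb F_2^{n - 1}$ be a maximal subspace of $S^*$. Then \[\sum_{x \in S^* \setminus T} c_\psi(x) \geq 2^{\frac{n}{2}-1} \left(\sqrt{3}-1\right) F_\mathcal{S}(\lvert\psi\rangle).\]
   Context: For $x=(a,b)\in\mathbb F_2^{2n}$ the Weyl operator is $W_x = i^{a\cdot b}X^{a_1}Z^{b_1}\otimes\cdots\otimes X^{a_n}Z^{b_n}$; $c_\psi(x)=2^{-n/2}\langle\psi|W_x|\psi\rangle$ (the coefficients in the Weyl expansion $\lvert\psi\rangle\langle\psi\rvert=2^{-n/2}\sum_x c_\psi(x)W_x$); $\mathrm{Weyl}(\lvert\phi\rangle)=\{x: W_x\lvert\phi\rangle=\pm\lvert\phi\rangle\}$; $F_\mathcal{S}(\lvert\psi\rangle)=\max_{\lvert\phi\rangle\text{ stabilizer}}\lvert\langle\phi|\psi\rangle\rvert^2$. *)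

theory Defs
  imports Complex_Main
begin

text \<open>Qubits are indexed 0,...,n-1. A vector in F_2^n is encoded as a
subset of {..<n} (its support); addition is symmetric difference and the dot
product of a and b is card (a \<inter> b). An n-qubit vector is a function
nat set \<Rightarrow> complex, the computational basis state |y> being indexed by
y \<subseteq> {..<n}; only the values on Pow {..<n} matter.\<close>

type_synonym qstate = "nat set \<Rightarrow> complex"

definition sdiff :: "nat set \<Rightarrow> nat set \<Rightarrow> nat set" where
  "sdiff a b = (a - b) \<union> (b - a)"

definition inner_q :: "nat \<Rightarrow> qstate \<Rightarrow> qstate \<Rightarrow> complex" where
  "inner_q n phi psi = (\<Sum>y\<in>Pow {..<n}. cnj (phi y) * psi y)"

definition is_qstate :: "nat \<Rightarrow> qstate \<Rightarrow> bool" where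
  "is_qstate n psi \<longleftrightarrow> (\<Sum>y\<in>Pow {..<n}. (cmod (psi y))\<^sup>2) = 1"

text \<open>Weyl operator W_(a,b) = i^(a.b) X^(a_1) Z^(b_1) (x) ... (x) X^(a_n) Z^(b_n):
X^a Z^b |y> = (-1)^(b.y) |y + a>.\<close>
definition weyl_op :: "nat set \<times> nat set \<Rightarrow> qstate \<Rightarrow> qstate" where
  "weyl_op x psi = (\<lambda>z. \<i> ^ card (fst x \<inter> snd x) *
      (-1) ^ card (snd x \<inter> sdiff z (fst x)) * psi (sdiff z (fst x)))"

definition c_coef :: "nat \<Rightarrow> qstate \<Rightarrow> nat set \<times> nat set \<Rightarrow> real" where
  "c_coef n psi x = Re (inner_q n psi (weyl_op x psi)) / sqrt (2 ^ n)"

definition zero_state :: qstate where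
  "zero_state = (\<lambda>z. if z = {} then 1 else 0)"

definition hadamard :: "nat \<Rightarrow> qstate \<Rightarrow> qstate" where
  "hadamard j psi = (\<lambda>z. (psi (z - {j}) + (if j \<in> z then -1 else 1) * psi (z \<union> {j}))
                          / complex_of_real (sqrt 2))"

definition phase_gate :: "nat \<Rightarrow> qstate \<Rightarrow> qstate" where
  "phase_gate j psi = (\<lambda>z. (if j \<in> z then \<i> else 1) * psi z)"

definition cnot :: "nat \<Rightarrow> nat \<Rightarrow> qstate \<Rightarrow> qstate" where
  "cnot j k psi = (\<lambda>z. psi (if j \<in> z then sdiff z {k} else z))"

inductive_set stab_states :: "nat \<Rightarrow> qstate set" for n :: nat where
  zero: "zero_state \<in> stab_states n"
| had: "phi \<in> stab_states n \<Longrightarrow> j < n \<Longrightarrow> hadamard j phi \<in> stab_states n"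
| ph: "phi \<in> stab_states n \<Longrightarrow> j < n \<Longrightarrow> phase_gate j phi \<in> stab_states n"
| cx: "phi \<in> stab_states n \<Longrightarrow> j < n \<Longrightarrow> k < n \<Longrightarrow> j \<noteq> k \<Longrightarrow> cnot j k phi \<in> stab_states n"
| glob: "phi \<in> stab_states n \<Longrightarrow> cmod c = 1 \<Longrightarrow> (\<lambda>z. c * phi z) \<in> stab_states n"

definition stab_fidelity :: "nat \<Rightarrow> qstate \<Rightarrow> real" where
  "stab_fidelity n psi = (SUP phi\<in>stab_states n. (cmod (inner_q n phi psi))\<^sup>2)"

definition weyl_set :: "nat \<Rightarrow> qstate \<Rightarrow> (nat set \<times> nat set) set" where
  "weyl_set n phi = {x. fst x \<subseteq> {..<n} \<and> snd x \<subseteq> {..<n} \<and>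
     ((\<forall>z\<in>Pow {..<n}. weyl_op x phi z = phi z) \<or> (\<forall>z\<in>Pow {..<n}. weyl_op x phi z = - phi z))}"

end

theory Submission
  imports Defs
begin

text \<open>The Z-type Weyl coefficients only see the computational-basis weights
p y = |psi y|^2, and summing them over a subspace Pow S of Z-strings picks out, by
character orthogonality, the weight of psi on the annihilator Pow ({..<n} - S). Hence
the sum over S* - T equals 2^(n-1) / 2^(n/2) (p {} - p {0}). On the other hand the
states (|0> + w |1>) / sqrt 2 (x) |0^(n-1)> with w in {1, i, -1, -i} are stabilizer
states, so maximality of |0^n> gives |a + w b|^2 <= 2 |a|^2 for a = psi {},
b = psi {0} and all four w; these force |b|^2 <= (2 - sqrt 3) |a|^2, while the
stabilizer fidelity is |a|^2.\<close>

lemma sum_Pow_neg_one_card_Int: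
  assumes "finite S"
  shows "(\<Sum>b\<in>Pow S. (-1::real) ^ card (b \<inter> y)) = (if S \<inter> y = {} then 2 ^ card S else 0)"
  using assms
proof (induction S rule: finite_induct)
  case empty
  then show ?case by simp
next
  case (insert a S)
  have sign_insert: "(-1::real) ^ card (insert a b \<inter> y) = (if a \<in> y then -1 else 1) * (-1) ^ card (b \<inter> y)"
    if "b \<in> Pow S" for b
  proof -
    have "a \<notin> b" "finite b"
      using that insert.hyps finite_subset[of b S] by auto
    then show ?thesis
      by (simp add: Int_insert_left card_insert_if)
  qed
  have "inj_on (insert a) (Pow S)"
    using insert.hyps by (auto simp: inj_on_def insert_ident)
  moreover have "Pow S \<inter> insert a ` Pow S = {}"
    using insert.hyps by auto
  ultimately have "(\<Sum>b\<in>Pow (insert a S). (-1::real) ^ card (b \<inter> y))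
      = (\<Sum>b\<in>Pow S. (-1::real) ^ card (b \<inter> y)) + (\<Sum>b\<in>Pow S. (-1::real) ^ card (insert a b \<inter> y))"
    using insert.hyps by (simp add: Pow_insert sum.union_disjoint sum.reindex)
  also have "\<dots> = (1 + (if a \<in> y then -1 else 1)) * (\<Sum>b\<in>Pow S. (-1::real) ^ card (b \<inter> y))"
    unfolding distrib_right sum_distrib_left[symmetric] using sign_insert by (simp add: sum_negf)
  finally show ?case
    using insert by (auto simp: card_insert_if)
qed

lemma weyl_op_Z: "weyl_op ({}, b) psi = (\<lambda>z. (-1) ^ card (b \<inter> z) * psi z)"
  unfolding weyl_op_def sdiff_def by simp

lemma c_coef_Z:
  "c_coef n psi ({}, b) = (\<Sum>y\<in>Pow {..<n}. (-1) ^ card (b \<inter> y) * (cmod (psi y))\<^sup>2) / sqrt (2 ^ n)"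
proof -
  have "cnj (psi y) * ((-1) ^ card (b \<inter> y) * psi y) = of_real ((-1) ^ card (b \<inter> y) * (cmod (psi y))\<^sup>2)"
    for y
    unfolding of_real_mult complex_norm_square by (simp add: algebra_simps)
  then show ?thesis
    unfolding c_coef_def inner_q_def weyl_op_Z Re_sum by (simp only: Re_complex_of_real)
qed

lemma sum_c_coef_Z_Pow:
  assumes "finite S"
  shows "(\<Sum>b\<in>Pow S. c_coef n psi ({}, b))
       = 2 ^ card S / sqrt (2 ^ n) * (\<Sum>y\<in>Pow ({..<n} - S). (cmod (psi y))\<^sup>2)"
proof -
  let ?p = "\<lambda>y. (cmod (psi y))\<^sup>2"
  have "(\<Sum>b\<in>Pow S. c_coef n psi ({}, b))
      = (\<Sum>y\<in>Pow {..<n}. ?p y * (\<Sum>b\<in>Pow S. (-1::real) ^ card (b \<inter> y))) / sqrt (2 ^ n)"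
    unfolding c_coef_Z sum_divide_distrib[symmetric]
    by (subst sum.swap) (simp add: sum_distrib_left mult.commute)
  also have "\<dots> = 2 ^ card S * (\<Sum>y\<in>Pow {..<n}. if S \<inter> y = {} then ?p y else 0) / sqrt (2 ^ n)"
    by (auto simp: sum_Pow_neg_one_card_Int[OF assms] sum_distrib_left intro!: sum.cong)
  also have "(\<Sum>y\<in>Pow {..<n}. if S \<inter> y = {} then ?p y else 0) = (\<Sum>y\<in>Pow ({..<n} - S). ?p y)"
    by (simp add: sum.inter_filter[symmetric]) (rule sum.cong; blast)
  finally show ?thesis
    by simp
qed

lemma sum_c_coef_Z_strings_containing_0:
  assumes "n \<ge> 1"
  shows "(\<Sum>x\<in>{({}, b) | b. b \<subseteq> {..<n}} - {({}, b) | b. b \<subseteq> {1..<n}}. c_coef n psi x)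
       = 2 ^ (n - 1) / sqrt (2 ^ n) * ((cmod (psi {}))\<^sup>2 - (cmod (psi {0}))\<^sup>2)"
proof -
  let ?p = "\<lambda>y. (cmod (psi y))\<^sup>2"
  have Z_strings: "{({}, b) | b. b \<subseteq> A} = Pair {} ` Pow A" for A :: "nat set"
    by auto
  have sum_Z: "(\<Sum>x\<in>Pair {} ` Pow A. c_coef n psi x) = (\<Sum>b\<in>Pow A. c_coef n psi ({}, b))" for A
    by (simp add: sum.reindex inj_on_def)
  have "{..<n} - {1..<n} = {0}" "Pow {0::nat} = {{}, {0}}"
    using assms by auto
  then have T_part: "(\<Sum>b\<in>Pow {1..<n}. c_coef n psi ({}, b)) = 2 ^ (n - 1) / sqrt (2 ^ n) * (?p {} + ?p {0})"
    by (simp add: sum_c_coef_Z_Pow)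
  have S_part: "(\<Sum>b\<in>Pow {..<n}. c_coef n psi ({}, b)) = 2 ^ n / sqrt (2 ^ n) * ?p {}"
    by (simp add: sum_c_coef_Z_Pow)
  have T_sub_S: "Pair {} ` Pow {1..<n} \<subseteq> Pair {} ` Pow {..<n}"
    by (intro image_mono) auto
  have "(\<Sum>x\<in>Pair {} ` Pow {..<n} - Pair {} ` Pow {1..<n}. c_coef n psi x)
      = 2 ^ n / sqrt (2 ^ n) * ?p {} - 2 ^ (n - 1) / sqrt (2 ^ n) * (?p {} + ?p {0})"
    by (subst sum_diff[OF _ T_sub_S]) (simp_all only: sum_Z S_part T_part finite_imageI finite_Pow_iff finite_lessThan)
  also have "\<dots> = 2 ^ (n - 1) / sqrt (2 ^ n) * (?p {} - ?p {0})"
  proof -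
    have "(2::real) ^ n = 2 * 2 ^ (n - 1)"
      using assms by (simp flip: power_Suc)
    then show ?thesis
      by (simp add: diff_divide_distrib[symmetric] algebra_simps)
  qed
  finally show ?thesis
    unfolding Z_strings .
qed

lemma le_two_minus_sqrt3_mult:
  fixes P Q :: real
  assumes "0 \<le> Q" "Q \<le> P" "4 * P * Q \<le> P\<^sup>2 + Q\<^sup>2"
  shows "Q \<le> (2 - sqrt 3) * P"
proof -
  have "(Q - (2 - sqrt 3) * P) * (Q - (2 + sqrt 3) * P) = P\<^sup>2 + Q\<^sup>2 - 4 * P * Q"
    by (simp add: power2_eq_square algebra_simps)
  then have "0 \<le> (Q - (2 - sqrt 3) * P) * (Q - (2 + sqrt 3) * P)"
    using assms(3) by simp
  moreover have "Q - (2 + sqrt 3) * P < 0 \<or> P = 0"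
  proof (cases "P = 0")
    case False
    then have "0 < (1 + sqrt 3) * P"
      using assms(1,2) by (simp add: add_pos_nonneg)
    then show ?thesis
      using assms(2) by (simp add: algebra_simps)
  qed simp
  ultimately show ?thesis
    using assms(1,2) by (auto simp: zero_le_mult_iff)
qed

lemma cmod_sq_le_of_quarter_turns:
  fixes a b :: complex
  assumes "\<And>k::nat. (cmod (a + (-\<i>) ^ k * b))\<^sup>2 \<le> 2 * (cmod a)\<^sup>2"
  shows "(cmod b)\<^sup>2 \<le> (2 - sqrt 3) * (cmod a)\<^sup>2"
proof (rule le_two_minus_sqrt3_mult)
  \<comment> \<open>u + \<i> v = cnj a * b; the four turns bound both |u| and |v| by (|a|^2 - |b|^2) / 2.\<close>
  define u where "u = Re a * Re b + Im a * Im b"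
  define v where "v = Re a * Im b - Im a * Re b"
  have "(cmod b)\<^sup>2 + 2 * u \<le> (cmod a)\<^sup>2" "(cmod b)\<^sup>2 - 2 * v \<le> (cmod a)\<^sup>2"
       "(cmod b)\<^sup>2 - 2 * u \<le> (cmod a)\<^sup>2" "(cmod b)\<^sup>2 + 2 * v \<le> (cmod a)\<^sup>2"
    using assms[of 0] assms[of 1] assms[of 2] assms[of 3] unfolding u_def v_def cmod_power2
    by (simp_all add: power2_eq_square numeral_eq_Suc algebra_simps)
  then have "2 * \<bar>u\<bar> \<le> (cmod a)\<^sup>2 - (cmod b)\<^sup>2" "2 * \<bar>v\<bar> \<le> (cmod a)\<^sup>2 - (cmod b)\<^sup>2"
    by auto
  then have "(2 * u)\<^sup>2 \<le> ((cmod a)\<^sup>2 - (cmod b)\<^sup>2)\<^sup>2" "(2 * v)\<^sup>2 \<le> ((cmod a)\<^sup>2 - (cmod b)\<^sup>2)\<^sup>2"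
    by (simp_all only: abs_le_square_iff[symmetric] abs_mult abs_numeral)
  moreover have "u\<^sup>2 + v\<^sup>2 = (cmod a)\<^sup>2 * (cmod b)\<^sup>2"
    unfolding u_def v_def cmod_power2 by (simp add: power2_eq_square algebra_simps)
  ultimately show "4 * (cmod a)\<^sup>2 * (cmod b)\<^sup>2 \<le> ((cmod a)\<^sup>2)\<^sup>2 + ((cmod b)\<^sup>2)\<^sup>2"
    by (simp add: power2_eq_square algebra_simps)
  show "(cmod b)\<^sup>2 \<le> (cmod a)\<^sup>2"
    using \<open>2 * \<bar>u\<bar> \<le> _\<close> by linarith
qed simp

definition first_qubit_state :: "complex \<Rightarrow> complex \<Rightarrow> qstate" where
  "first_qubit_state a b = (\<lambda>z. if z = {} then a else if z = {0} then b else 0)"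

lemma inner_q_zero_state: "inner_q n zero_state psi = psi {}"
  unfolding inner_q_def zero_state_def by (simp add: if_distrib[of cnj] if_distrib[of "\<lambda>c. c * _"] cong: if_cong)

lemma inner_q_first_qubit_state:
  assumes "n \<ge> 1"
  shows "inner_q n (first_qubit_state a b) psi = cnj a * psi {} + cnj b * psi {0}"
proof -
  have "inner_q n (first_qubit_state a b) psi = (\<Sum>y\<in>{{}, {0}}. cnj (first_qubit_state a b y) * psi y)"
    unfolding inner_q_def by (rule sum.mono_neutral_right) (use assms in \<open>auto simp: first_qubit_state_def\<close>)
  then show ?thesis
    by (simp add: first_qubit_state_def)
qed

lemma hadamard_zero_state:
  "hadamard 0 zero_state = first_qubit_state (1 / sqrt 2) (1 / sqrt 2)"
proof
  fix z :: "nat set"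
  have "z - {0} = {} \<longleftrightarrow> z = {} \<or> z = {0}"
    by auto
  then show "hadamard 0 zero_state z = first_qubit_state (1 / sqrt 2) (1 / sqrt 2) z"
    unfolding hadamard_def zero_state_def first_qubit_state_def by auto
qed

lemma phase_gate_first_qubit_state:
  "phase_gate 0 (first_qubit_state a b) = first_qubit_state a (\<i> * b)"
  unfolding phase_gate_def first_qubit_state_def by auto

lemma first_qubit_state_in_stab_states:
  assumes "0 < n"
  shows "first_qubit_state (1 / sqrt 2) (\<i> ^ k / sqrt 2) \<in> stab_states n"
proof (induction k)
  case 0
  then show ?case
    using stab_states.had[OF stab_states.zero assms] by (simp add: hadamard_zero_state)
next
  case (Suc k)
  then show ?case
    using stab_states.ph[OF Suc assms] by (simp add: phase_gate_first_qubit_state)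
qed

lemma cmod_flip0_le_of_zero_state_optimal:
  assumes "n \<ge> 1"
    and "\<forall>phi\<in>stab_states n. (cmod (inner_q n phi psi))\<^sup>2 \<le> (cmod (inner_q n zero_state psi))\<^sup>2"
  shows "(cmod (psi {0}))\<^sup>2 \<le> (2 - sqrt 3) * (cmod (psi {}))\<^sup>2"
proof (rule cmod_sq_le_of_quarter_turns)
  fix k :: nat
  have "inner_q n (first_qubit_state (1 / sqrt 2) (\<i> ^ k / sqrt 2)) psi
      = (psi {} + (-\<i>) ^ k * psi {0}) / sqrt 2"
    using assms(1) by (simp add: inner_q_first_qubit_state add_divide_distrib)
  moreover have "first_qubit_state (1 / sqrt 2) (\<i> ^ k / sqrt 2) \<in> stab_states n"
    using assms(1) by (intro first_qubit_state_in_stab_states) simp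
  ultimately have "(cmod ((psi {} + (-\<i>) ^ k * psi {0}) / sqrt 2))\<^sup>2 \<le> (cmod (psi {}))\<^sup>2"
    using assms(2) by (metis inner_q_zero_state)
  then show "(cmod (psi {} + (-\<i>) ^ k * psi {0}))\<^sup>2 \<le> 2 * (cmod (psi {}))\<^sup>2"
    by (simp add: norm_divide power_divide)
qed

lemma stab_fidelity_eq_of_zero_state_optimal:
  assumes "\<forall>phi\<in>stab_states n. (cmod (inner_q n phi psi))\<^sup>2 \<le> (cmod (inner_q n zero_state psi))\<^sup>2"
  shows "stab_fidelity n psi = (cmod (psi {}))\<^sup>2"
  unfolding stab_fidelity_def
proof (rule cSup_eq_maximum)
  show "(cmod (psi {}))\<^sup>2 \<in> (\<lambda>phi. (cmod (inner_q n phi psi))\<^sup>2) ` stab_states n"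
    using stab_states.zero by (force simp: inner_q_zero_state)
  show "x \<le> (cmod (psi {}))\<^sup>2" if "x \<in> (\<lambda>phi. (cmod (inner_q n phi psi))\<^sup>2) ` stab_states n" for x
    using that assms by (auto simp: inner_q_zero_state)
qed

lemma two_powr_half_minus_one:
  assumes "n \<ge> 1"
  shows "2 powr (real n / 2 - 1) = 2 ^ (n - 1) / sqrt (2 ^ n)"
proof -
  have "sqrt (2 ^ n) = 2 powr (real n / 2)"
    by (simp add: powr_half_sqrt[symmetric] powr_realpow[symmetric] powr_powr)
  moreover have "(2::real) ^ (n - 1) = 2 powr (real n - 1)"
    using assms by (simp add: powr_realpow[symmetric] of_nat_diff)
  ultimately show ?thesis
    by (simp add: powr_diff[symmetric])
qed

theorem lemma5p4:
  fixes n :: nat and psi :: qstate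
  assumes "n \<ge> 1"
    and "is_qstate n psi"
    and "\<forall>phi\<in>stab_states n. (cmod (inner_q n phi psi))\<^sup>2 \<le> (cmod (inner_q n zero_state psi))\<^sup>2"
  shows "(\<Sum>x\<in>{({}, b) | b. b \<subseteq> {..<n}} - {({}, b) | b. b \<subseteq> {1..<n}}. c_coef n psi x)
           \<ge> 2 powr (real n / 2 - 1) * (sqrt 3 - 1) * stab_fidelity n psi"
proof -
  have "(sqrt 3 - 1) * (cmod (psi {}))\<^sup>2 \<le> (cmod (psi {}))\<^sup>2 - (cmod (psi {0}))\<^sup>2"
    using cmod_flip0_le_of_zero_state_optimal[OF assms(1,3)] by (simp add: algebra_simps)
  then have "2 ^ (n - 1) / sqrt (2 ^ n) * ((sqrt 3 - 1) * (cmod (psi {}))\<^sup>2)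
      \<le> 2 ^ (n - 1) / sqrt (2 ^ n) * ((cmod (psi {}))\<^sup>2 - (cmod (psi {0}))\<^sup>2)"
    by (rule mult_left_mono) simp
  then show ?thesis
    unfolding sum_c_coef_Z_strings_containing_0[OF assms(1)] stab_fidelity_eq_of_zero_state_optimal[OF assms(3)]
      two_powr_half_minus_one[OF assms(1)]
    by (simp only: mult.assoc)
qed

end
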